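(* Let $B>0$, $0<\epsilon<1$, $T>4\epsilon$, and let $z\in W^{1,\infty}\bigl(([0,1]\times[0,T])^2\bigr)$, $z=z(x,t,y,s)$, satisfy $|z(x,t,y,s)|\le B$ for all $(x,t),(y,s)\in[0,1]\times[0,T]$. Then there is a constant $C>0$, independent of $z$ and $\epsilon$, such that $$\Bigl|\int_0^1\int_0^T\int_0^1\int_0^T\Bigl(\overline\varphi^{y,s}_\epsilon(x,t)\,\partial_tz(x,t,y,s)+z(x,t,y,s)\,\partial_t\overline\varphi^{y,s}_\epsilon(x,t)\Bigr)dt\,dx\,ds\,dy\Bigr|\le CB\epsilon.$$
   Context: $\sigma=\tanh$, $\alpha=3\ln(1/\epsilon)/\epsilon$, $\beta=9\ln(1/\epsilon)/\epsilon^3$, $\chi_\epsilon(t)=\frac{1}{2\sigma(\alpha\epsilon)}(\sigma(\alpha(t-2\epsilon))-\sigma(\alpha(t-T+2\epsilon)))$, $\rho_\epsilon(x)=\frac{\sigma(\beta(x+\epsilon^6))-\sigma(\beta(x-\epsilon^6))}{2\epsilon^6}$, and for $(y,s)\in[0,1]\times[0,T]$, $\overline\varphi^{y,s}_\epsilon(x,t)=\chi_\epsilon(\tfrac{t+s}2)\rho_\epsilon(x-y)\rho_\epsilon(t-s)$ for $(x,t)\in[0,1]\times[0,T]$. *)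

theory Defs
  imports "HOL-Analysis.Analysis"
begin

definition alpha_eps :: "real \<Rightarrow> real" where
  "alpha_eps \<epsilon> = 3 * ln (1 / \<epsilon>) / \<epsilon>"

definition beta_eps :: "real \<Rightarrow> real" where
  "beta_eps \<epsilon> = 9 * ln (1 / \<epsilon>) / \<epsilon> ^ 3"

definition chi_eps :: "real \<Rightarrow> real \<Rightarrow> real \<Rightarrow> real" where
  "chi_eps \<epsilon> T t =
     (tanh (alpha_eps \<epsilon> * (t - 2 * \<epsilon>)) - tanh (alpha_eps \<epsilon> * (t - T + 2 * \<epsilon>)))
     / (2 * tanh (alpha_eps \<epsilon> * \<epsilon>))"

definition rho_eps :: "real \<Rightarrow> real \<Rightarrow> real" where
  "rho_eps \<epsilon> x =
     (tanh (beta_eps \<epsilon> * (x + \<epsilon> ^ 6)) - tanh (beta_eps \<epsilon> * (x - \<epsilon> ^ 6))) / (2 * \<epsilon> ^ 6)"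

text \<open>phibar_eps epsilon T y s x t = the test function with parameters (y,s), evaluated at (x,t)\<close>
definition phibar_eps :: "real \<Rightarrow> real \<Rightarrow> real \<Rightarrow> real \<Rightarrow> real \<Rightarrow> real \<Rightarrow> real" where
  "phibar_eps \<epsilon> T y s x t = chi_eps \<epsilon> T ((t + s) / 2) * rho_eps \<epsilon> (x - y) * rho_eps \<epsilon> (t - s)"

end

theory Submission
  imports Defs
begin

(* For fixed (x, y, s) the integrand is the t-derivative of phibar * z, which is Lipschitz in t,
   so the t-integral collapses to the boundary term [phibar * z] from t = 0 to t = T.
   By the reflection symmetry of chi about T/2 and the evenness of rho, both boundary values of
   phibar have the form chi (r/2) * rho r * rho (x - y) with r = s or r = T - s, and
   chi (r/2) * rho r = O(epsilon) uniformly in r >= 0: near r = 0 the cut-off chi is of size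
   exp (alpha (r - 4 epsilon)), away from 0 the mollifier rho is of size exp (-2 beta r), and beta
   dominates alpha (for epsilon >= 1/2 crude bounds on chi and rho suffice).  Since the integral of rho (x - y) over x is at most 2, integrating the
   boundary term over x, s and y gives the bound. *)

section \<open>Lipschitz functions\<close>

lemma lipschitz_on_bounded_real_derivative:
  fixes f f' :: "real \<Rightarrow> real"
  assumes "convex S" "\<And>x. x \<in> S \<Longrightarrow> (f has_real_derivative f' x) (at x within S)"
    "\<And>x. x \<in> S \<Longrightarrow> \<bar>f' x\<bar> \<le> C" "0 \<le> C"
  shows "C-lipschitz_on S f"
proof (rule bounded_derivative_imp_lipschitz)
  fix x assume x: "x \<in> S"
  show "(f has_derivative (*) (f' x)) (at x within S)"
    using assms(2)[OF x] by (simp add: has_field_derivative_def)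
  have "((*\<^sub>R) (f' x) :: real \<Rightarrow> real) = (*) (f' x)" by (rule ext) simp
  then have "onorm ((*) (f' x)) = \<bar>f' x\<bar>"
    using onorm_scaleR[OF bounded_linear_ident[where 'a=real], of "f' x"] by (simp add: onorm_id)
  then show "onorm ((*) (f' x)) \<le> C" using assms(3)[OF x] by simp
qed fact+

lemma lipschitz_on_divide_real:
  fixes f :: "'a::metric_space \<Rightarrow> real"
  shows "C-lipschitz_on U f \<Longrightarrow> (C / \<bar>c\<bar>)-lipschitz_on U (\<lambda>x. f x / c)"
  using lipschitz_on_cmult_real[of C U f "inverse c"] by (simp add: divide_inverse mult.commute)

lemma lipschitz_on_mult_compact:
  fixes f g :: "'a::metric_space \<Rightarrow> 'b::real_normed_algebra"
  assumes S: "compact S" and f: "K-lipschitz_on S f" and g: "M-lipschitz_on S g"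
  obtains L where "L-lipschitz_on S (\<lambda>x. f x * g x)"
proof -
  obtain A where A: "A > 0" "\<And>x. x \<in> S \<Longrightarrow> norm (f x) \<le> A"
    using compact_imp_bounded[OF compact_continuous_image[OF lipschitz_on_continuous_on[OF f] S]]
    by (auto simp: bounded_pos)
  obtain B where B: "B > 0" "\<And>x. x \<in> S \<Longrightarrow> norm (g x) \<le> B"
    using compact_imp_bounded[OF compact_continuous_image[OF lipschitz_on_continuous_on[OF g] S]]
    by (auto simp: bounded_pos)
  have "(A * M + B * K)-lipschitz_on S (\<lambda>x. f x * g x)"
  proof (rule lipschitz_onI)
    fix x y assume xy: "x \<in> S" "y \<in> S"
    have "dist (f x * g x) (f y * g y) = norm (f x * (g x - g y) + (f x - f y) * g y)"
      by (simp add: dist_norm algebra_simps)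
    also have "\<dots> \<le> norm (f x) * norm (g x - g y) + norm (f x - f y) * norm (g y)"
      by (rule order_trans[OF norm_triangle_ineq add_mono[OF norm_mult_ineq norm_mult_ineq]])
    also have "\<dots> \<le> A * (M * dist x y) + (K * dist x y) * B"
      using lipschitz_onD[OF f xy] lipschitz_onD[OF g xy] lipschitz_on_nonneg[OF f] A B xy
      by (intro add_mono mult_mono) (auto simp: dist_norm)
    finally show "dist (f x * g x) (f y * g y) \<le> (A * M + B * K) * dist x y"
      by (simp add: algebra_simps)
  next
    show "0 \<le> A * M + B * K"
      using A B lipschitz_on_nonneg[OF f] lipschitz_on_nonneg[OF g] by simp
  qed
  then show thesis by (rule that)
qed

section \<open>The fundamental theorem of calculus for Lipschitz functions\<close>

lemma DERIV_difference_quotient_LIMSEQ: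
  fixes f :: "real \<Rightarrow> real"
  assumes "(f has_real_derivative D) (at t)" "h \<longlonglongrightarrow> 0" "\<And>n. h n \<noteq> 0"
  shows "(\<lambda>n. (f (t + h n) - f t) / h n) \<longlonglongrightarrow> D"
proof -
  have "(\<lambda>k. (f (t + k) - f t) / k) \<midarrow>0\<rightarrow> D" using assms(1) by (simp add: DERIV_def)
  then show ?thesis using assms(2,3) LIMSEQ_SEQ_conv[of 0 "\<lambda>k. (f (t + k) - f t) / k" D] by blast
qed

lemma integral_upper_has_real_derivative:
  fixes g :: "real \<Rightarrow> real"
  assumes "continuous_on UNIV g" "a < t"
  shows "((\<lambda>x. integral {a..x} g) has_real_derivative g t) (at t)"
proof -
  have "((\<lambda>x. integral {a..x} g) has_real_derivative g t) (at t within {a..t + 1})"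
    using assms by (intro integral_has_real_derivative continuous_on_subset[OF assms(1)]) auto
  then show ?thesis using assms(2) by (simp add: at_within_Icc_at)
qed

lemma integral_difference_quotient_LIMSEQ:
  fixes G :: "real \<Rightarrow> real" and h :: "nat \<Rightarrow> real"
  assumes G: "continuous_on UNIV G" and ab: "a \<le> b" and h: "\<And>n. h n > 0" "h \<longlonglongrightarrow> 0"
  shows "(\<lambda>n. integral {a..b} (\<lambda>t. (G (t + h n) - G t) / h n)) \<longlonglongrightarrow> G b - G a"
proof -
  define Q where "Q x = integral {a - 1..x} G" for x
  have Q': "(Q has_real_derivative G u) (at u)" if "a \<le> u" for u
    unfolding Q_def using G that by (intro integral_upper_has_real_derivative) auto
  have steklov: "integral {a..b} (\<lambda>t. (G (t + h n) - G t) / h n)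
      = (Q (b + h n) - Q b) / h n - (Q (a + h n) - Q a) / h n" for n
  proof -
    define P where "P t = (Q (t + h n) - Q t) / h n" for t
    have "((\<lambda>t. (G (t + h n) - G t) / h n) has_integral P b - P a) {a..b}"
    proof (rule fundamental_theorem_of_calculus[OF ab])
      fix t assume t: "t \<in> {a..b}"
      have "((\<lambda>x. Q (x + h n)) has_real_derivative G (t + h n)) (at t)"
        using Q'[of "t + h n"] t h(1)[of n] by (simp add: DERIV_shift)
      then have "(P has_real_derivative (G (t + h n) - G t) / h n) (at t)"
        unfolding P_def using Q' t h(1)[of n] by (auto intro!: derivative_eq_intros)
      then show "(P has_vector_derivative (G (t + h n) - G t) / h n) (at t within {a..b})"
        by (simp add: has_real_derivative_iff_has_vector_derivative[symmetric]
            has_field_derivative_at_within)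
    qed
    then show ?thesis unfolding P_def by (rule integral_unique)
  qed
  show ?thesis
    unfolding steklov using ab h
    by (intro tendsto_diff DERIV_difference_quotient_LIMSEQ Q') (auto simp: less_imp_neq[symmetric])
qed

(* The difference quotients of G are bounded by L and converge to G' off a null set, and their
   integrals are the steklov averages of G at the end points, so dominated convergence applies. *)
lemma lipschitz_UNIV_ae_derivative_has_integral:
  fixes G G' :: "real \<Rightarrow> real"
  assumes ab: "a \<le> b" and lip: "L-lipschitz_on UNIV G"
    and ae: "AE t in lborel. t \<in> {a<..<b} \<longrightarrow> (G has_real_derivative G' t) (at t)"
  shows "(G' has_integral (G b - G a)) {a..b}"
proof -
  obtain N where N: "{t \<in> space lborel. \<not> (t \<in> {a<..<b} \<longrightarrow> (G has_real_derivative G' t) (at t))} \<subseteq> N"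
    "emeasure lborel N = 0" "N \<in> sets lborel"
    using ae by (rule AE_E)
  define S where "S = {a<..<b} - N"
  have "negligible N"
    using N by (auto simp: negligible_iff_null_sets intro!: null_sets_completionI)
  then have "negligible (N \<union> {a, b})" by simp
  then have negS: "negligible ({a..b} - S)" by (rule negligible_subset) (auto simp: S_def)
  define h where "h n = inverse (real (Suc n))" for n
  have h: "h n > 0" for n unfolding h_def by simp
  then have h_nz: "h n \<noteq> 0" for n by (metis less_irrefl)
  have h0: "h \<longlonglongrightarrow> 0" unfolding h_def by (rule LIMSEQ_inverse_real_of_nat)
  define f where "f n t = indicator S t * ((G (t + h n) - G t) / h n)" for n t
  have contG: "continuous_on UNIV G" by (rule lipschitz_on_continuous_on[OF lip])
  have f_int: "(f n has_integral integral {a..b} (\<lambda>t. (G (t + h n) - G t) / h n)) {a..b}" for n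
  proof (rule has_integral_spike[OF negS])
    show "((\<lambda>t. (G (t + h n) - G t) / h n) has_integral integral {a..b} (\<lambda>t. (G (t + h n) - G t) / h n)) {a..b}"
      by (intro integrable_integral integrable_continuous_interval continuous_intros
          continuous_on_compose2[OF contG]) (auto simp: h_nz)
  qed (auto simp: f_def)
  have f_bound: "norm (f n t) \<le> L" for n t
  proof -
    have "\<bar>G (t + h n) - G t\<bar> \<le> L * h n"
      using lipschitz_onD[OF lip, of "t + h n" t] h[of n] by (simp add: dist_real_def)
    then show ?thesis using h[of n] lipschitz_on_nonneg[OF lip]
      by (simp add: f_def indicator_def abs_div divide_le_eq)
  qed
  have f_lim: "(\<lambda>n. f n t) \<longlonglongrightarrow> indicator S t * G' t" for t
  proof (cases "t \<in> S")
    case True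
    then have "(G has_real_derivative G' t) (at t)" using N(1) by (auto simp: S_def)
    then show ?thesis using True h0 h_nz by (simp add: f_def DERIV_difference_quotient_LIMSEQ)
  qed (simp add: f_def)
  have "((\<lambda>t. indicator S t * G' t) has_integral (G b - G a)) {a..b}"
    using f_bound f_lim
    by (intro has_integral_dominated_convergence[OF f_int _ _ _
          integral_difference_quotient_LIMSEQ[OF contG ab h h0], where h = "\<lambda>_. L"]) auto
  then show ?thesis by (rule has_integral_spike[OF negS, rotated]) (auto simp: S_def)
qed

lemma lipschitz_ae_derivative_has_integral:
  fixes g g' :: "real \<Rightarrow> real"
  assumes ab: "a \<le> b" and lip: "L-lipschitz_on {a..b} g"
    and ae: "AE t in lborel. t \<in> {a<..<b} \<longrightarrow> (g has_real_derivative g' t) (at t)"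
  shows "(g' has_integral (g b - g a)) {a..b}"
proof -
  define G where "G t = g (max a (min b t))" for t
  have "1-lipschitz_on UNIV (\<lambda>t. max a (min b t))"
    by (rule lipschitz_onI) (auto simp: dist_real_def)
  then have "(L * 1)-lipschitz_on UNIV G"
    unfolding G_def using ab by (intro lipschitz_on_compose2 lipschitz_on_subset[OF lip]) auto
  moreover have "AE t in lborel. t \<in> {a<..<b} \<longrightarrow> (G has_real_derivative g' t) (at t)"
    using ae
  proof (rule eventually_mono, intro impI)
    fix t assume "t \<in> {a<..<b} \<longrightarrow> (g has_real_derivative g' t) (at t)" and t: "t \<in> {a<..<b}"
    then have "(g has_real_derivative g' t) (at t)" by blast
    then show "(G has_real_derivative g' t) (at t)"
      by (rule has_field_derivative_transform_within_open[where S = "{a<..<b}"]) (use t in \<open>auto simp: G_def\<close>)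
  qed
  ultimately have "(g' has_integral (G b - G a)) {a..b}"
    by (intro lipschitz_UNIV_ae_derivative_has_integral[OF ab])
  then show ?thesis using ab by (simp add: G_def)
qed

lemma lipschitz_ae_product_rule_has_integral:
  fixes \<phi> \<phi>' w w' :: "real \<Rightarrow> real"
  assumes ab: "a \<le> b" and "K-lipschitz_on {a..b} \<phi>"
    and \<phi>': "\<And>t. t \<in> {a<..<b} \<Longrightarrow> (\<phi> has_real_derivative \<phi>' t) (at t)"
    and "L-lipschitz_on {a..b} w"
    and w': "AE t in lborel. t \<in> {a<..<b} \<longrightarrow> (w has_real_derivative w' t) (at t)"
  shows "((\<lambda>t. \<phi> t * w' t + w t * \<phi>' t) has_integral (\<phi> b * w b - \<phi> a * w a)) {a..b}"
proof -
  obtain M where "M-lipschitz_on {a..b} (\<lambda>t. \<phi> t * w t)"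
    using lipschitz_on_mult_compact[OF compact_Icc assms(2,4)] .
  moreover have "AE t in lborel. t \<in> {a<..<b} \<longrightarrow>
      ((\<lambda>t. \<phi> t * w t) has_real_derivative \<phi> t * w' t + w t * \<phi>' t) (at t)"
    using w'
  proof (rule eventually_mono, intro impI)
    fix t assume "t \<in> {a<..<b} \<longrightarrow> (w has_real_derivative w' t) (at t)" and t: "t \<in> {a<..<b}"
    then have "(w has_real_derivative w' t) (at t)" by blast
    from DERIV_mult'[OF \<phi>'[OF t] this]
    show "((\<lambda>t. \<phi> t * w t) has_real_derivative \<phi> t * w' t + w t * \<phi>' t) (at t)"
      by (simp add: mult.commute)
  qed
  ultimately show ?thesis by (rule lipschitz_ae_derivative_has_integral[OF ab])
qed

lemma abs_integral_le_integral:
  fixes f g :: "'a::euclidean_space \<Rightarrow> real"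
  assumes "\<And>x. x \<in> S \<Longrightarrow> \<bar>f x\<bar> \<le> g x" "g integrable_on S"
  shows "\<bar>integral S f\<bar> \<le> integral S g"
proof (cases "f integrable_on S")
  case True
  then show ?thesis using integral_norm_bound_integral[OF True assms(2)] assms(1) by simp
next
  case False
  (* a non-integrable function has integral 0 by convention *)
  have "0 \<le> integral S g" by (rule integral_nonneg[OF assms(2)]) (use assms(1) in force)
  then show ?thesis using not_integrable_integral[OF False] by simp
qed

section \<open>Elementary bounds for tanh\<close>

lemma lipschitz_on_tanh: "1-lipschitz_on S (tanh :: real \<Rightarrow> real)"
proof (rule lipschitz_on_subset[OF _ subset_UNIV], rule lipschitz_on_bounded_real_derivative)
  show "(tanh has_real_derivative 1 - tanh x ^ 2) (at x within UNIV)" for x :: real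
    by (auto intro!: derivative_eq_intros)
  show "\<bar>1 - tanh x ^ 2\<bar> \<le> 1" for x :: real
    using tanh_real_bounds[of x] by (auto simp: abs_square_le_1 abs_less_iff)
qed auto

lemma abs_tanh_diff_le: "\<bar>tanh p - tanh q\<bar> \<le> \<bar>p - q\<bar>" for p q :: real
  using lipschitz_onD[OF lipschitz_on_tanh, of p UNIV q] by (simp add: dist_real_def)

lemma DERIV_ln_cosh: "((\<lambda>x. ln (cosh x)) has_real_derivative tanh x) (at x)" for x :: real
  by (auto intro!: derivative_eq_intros simp: tanh_def)

lemma abs_ln_cosh_diff_le: "\<bar>ln (cosh p) - ln (cosh q)\<bar> \<le> \<bar>p - q\<bar>" for p q :: real
proof -
  have "1-lipschitz_on UNIV (\<lambda>x::real. ln (cosh x))"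
  proof (rule lipschitz_on_bounded_real_derivative)
    show "((\<lambda>x. ln (cosh x)) has_real_derivative tanh x) (at x within UNIV)" for x :: real
      by (rule DERIV_ln_cosh)
    show "\<bar>tanh x\<bar> \<le> 1" for x :: real
      using tanh_real_bounds[of x] by auto
  qed auto
  from lipschitz_onD[OF this, of p q] show ?thesis by (simp add: dist_real_def)
qed

lemma one_plus_tanh_le: "1 + tanh p \<le> 2 * exp (2 * p)" for p :: real
proof -
  define e where "e = exp (-2 * p)"
  have e: "e > 0" unfolding e_def by simp
  have "1 + tanh p = 2 / (1 + e)"
    unfolding tanh_real_altdef e_def[symmetric] using e by (simp add: field_simps)
  also have "\<dots> \<le> 2 / e" using e by (simp add: frac_le)
  also have "\<dots> = 2 * exp (2 * p)" unfolding e_def by (simp add: exp_minus field_simps)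
  finally show ?thesis .
qed

lemma one_minus_tanh_le: "1 - tanh p \<le> 2 * exp (- 2 * p)" for p :: real
  using one_plus_tanh_le[of "- p"] by simp

section \<open>The cut-off and the mollifier\<close>

lemma alpha_eps_pos: "0 < \<epsilon> \<Longrightarrow> \<epsilon> < 1 \<Longrightarrow> 0 < alpha_eps \<epsilon>"
  unfolding alpha_eps_def by simp

lemma beta_eps_pos: "0 < \<epsilon> \<Longrightarrow> \<epsilon> < 1 \<Longrightarrow> 0 < beta_eps \<epsilon>"
  unfolding beta_eps_def by simp

lemma ln_inverse_le: "0 < \<epsilon> \<Longrightarrow> ln (1 / \<epsilon>) \<le> (1 - \<epsilon>) / \<epsilon>" for \<epsilon> :: real
  using ln_le_minus_one[of "1 / \<epsilon>"] by (simp add: diff_divide_distrib)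

lemma tanh_alpha_eps_mult_eps:
  assumes "0 < \<epsilon>"
  shows "tanh (alpha_eps \<epsilon> * \<epsilon>) = (1 - \<epsilon> ^ 6) / (1 + \<epsilon> ^ 6)"
proof -
  have "alpha_eps \<epsilon> * \<epsilon> = - ln (\<epsilon> ^ 3)"
    unfolding alpha_eps_def using assms by (simp add: ln_div ln_realpow)
  then show ?thesis
    using assms by (simp add: tanh_minus tanh_ln_real minus_divide_left flip: power_mult)
qed

lemma chi_eps_reflect: "chi_eps \<epsilon> T (T - t) = chi_eps \<epsilon> T t"
proof -
  have "alpha_eps \<epsilon> * (T - t - 2 * \<epsilon>) = - (alpha_eps \<epsilon> * (t - T + 2 * \<epsilon>))"
    and "alpha_eps \<epsilon> * (T - t - T + 2 * \<epsilon>) = - (alpha_eps \<epsilon> * (t - 2 * \<epsilon>))"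
    by algebra+
  then show ?thesis unfolding chi_eps_def by (simp add: tanh_minus)
qed

lemma rho_eps_minus: "rho_eps \<epsilon> (- x) = rho_eps \<epsilon> x"
proof -
  have "beta_eps \<epsilon> * (- x + \<epsilon> ^ 6) = - (beta_eps \<epsilon> * (x - \<epsilon> ^ 6))"
    and "beta_eps \<epsilon> * (- x - \<epsilon> ^ 6) = - (beta_eps \<epsilon> * (x + \<epsilon> ^ 6))"
    by algebra+
  then show ?thesis unfolding rho_eps_def by (simp add: tanh_minus)
qed

lemma rho_eps_nonneg:
  assumes "0 < \<epsilon>" "\<epsilon> < 1"
  shows "0 \<le> rho_eps \<epsilon> x"
proof -
  have "beta_eps \<epsilon> * (x - \<epsilon> ^ 6) \<le> beta_eps \<epsilon> * (x + \<epsilon> ^ 6)"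
    using beta_eps_pos[OF assms] assms by (intro mult_left_mono) auto
  then show ?thesis unfolding rho_eps_def using assms by simp
qed

lemma rho_eps_le_beta_eps:
  assumes "0 < \<epsilon>" "\<epsilon> < 1"
  shows "rho_eps \<epsilon> x \<le> beta_eps \<epsilon>"
proof -
  have "tanh (beta_eps \<epsilon> * (x + \<epsilon> ^ 6)) - tanh (beta_eps \<epsilon> * (x - \<epsilon> ^ 6))
      \<le> \<bar>beta_eps \<epsilon> * (x + \<epsilon> ^ 6) - beta_eps \<epsilon> * (x - \<epsilon> ^ 6)\<bar>"
    using abs_tanh_diff_le by (rule abs_le_D1)
  also have "\<dots> = beta_eps \<epsilon> * (2 * \<epsilon> ^ 6)"
    using beta_eps_pos[OF assms] assms by (simp add: algebra_simps)
  finally show ?thesis unfolding rho_eps_def using assms by (simp add: divide_le_eq mult_ac)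
qed

lemma rho_eps_le_exp:
  assumes "0 < \<epsilon>"
  shows "rho_eps \<epsilon> x \<le> exp (- 2 * beta_eps \<epsilon> * (x - \<epsilon> ^ 6)) / \<epsilon> ^ 6"
proof -
  have "tanh (beta_eps \<epsilon> * (x + \<epsilon> ^ 6)) - tanh (beta_eps \<epsilon> * (x - \<epsilon> ^ 6))
      \<le> 1 - tanh (beta_eps \<epsilon> * (x - \<epsilon> ^ 6))"
    using tanh_real_lt_1[of "beta_eps \<epsilon> * (x + \<epsilon> ^ 6)"] by linarith
  also have "\<dots> \<le> 2 * exp (- 2 * beta_eps \<epsilon> * (x - \<epsilon> ^ 6))"
    using one_minus_tanh_le by (simp add: mult.assoc)
  finally show ?thesis unfolding rho_eps_def using assms by (simp add: divide_le_eq field_simps)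
qed

lemma chi_eps_le:
  assumes "0 < \<epsilon>" "\<epsilon> < 1" "4 * \<epsilon> < T"
  shows "chi_eps \<epsilon> T t \<le> 3 * T / \<epsilon> ^ 2"
proof -
  have e6: "\<epsilon> ^ 6 \<le> \<epsilon>" "\<epsilon> ^ 6 < 1"
    using assms power_decreasing[of 1 6 \<epsilon>] by (auto simp: power_less_one_iff)
  have "tanh (alpha_eps \<epsilon> * (t - 2 * \<epsilon>)) - tanh (alpha_eps \<epsilon> * (t - T + 2 * \<epsilon>))
      \<le> \<bar>alpha_eps \<epsilon> * (t - 2 * \<epsilon>) - alpha_eps \<epsilon> * (t - T + 2 * \<epsilon>)\<bar>"
    using abs_tanh_diff_le by (rule abs_le_D1)
  also have "\<dots> \<le> alpha_eps \<epsilon> * T"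
    using alpha_eps_pos[OF assms(1,2)] assms by (simp add: algebra_simps)
  also have "\<dots> \<le> 3 * ((1 - \<epsilon>) / \<epsilon>) / \<epsilon> * T"
    using ln_inverse_le[OF assms(1)] assms unfolding alpha_eps_def
    by (intro mult_right_mono divide_right_mono mult_left_mono) auto
  also have "\<dots> = 3 * T / \<epsilon> ^ 2 * (1 - \<epsilon>)"
    by (simp add: power2_eq_square)
  also have "\<dots> \<le> 3 * T / \<epsilon> ^ 2 * (2 * tanh (alpha_eps \<epsilon> * \<epsilon>))"
  proof (rule mult_left_mono)
    have "(1 - \<epsilon> ^ 6) * (1 + \<epsilon> ^ 6) \<le> (1 - \<epsilon> ^ 6) * 2"
      using e6 by (intro mult_left_mono) auto
    then have "1 - \<epsilon> ^ 6 \<le> 2 * ((1 - \<epsilon> ^ 6) / (1 + \<epsilon> ^ 6))"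
      by (simp add: le_divide_eq add_pos_nonneg mult.commute)
    then show "1 - \<epsilon> \<le> 2 * tanh (alpha_eps \<epsilon> * \<epsilon>)"
      unfolding tanh_alpha_eps_mult_eps[OF assms(1)] using e6 by linarith
  qed (use assms in simp)
  finally show ?thesis
    unfolding chi_eps_def using alpha_eps_pos[OF assms(1,2)] assms(1) by (simp add: pos_divide_le_eq)
qed

lemma chi_eps_nonneg:
  assumes "0 < \<epsilon>" "\<epsilon> < 1" "4 * \<epsilon> \<le> T"
  shows "0 \<le> chi_eps \<epsilon> T t"
proof -
  have "alpha_eps \<epsilon> * (t - T + 2 * \<epsilon>) \<le> alpha_eps \<epsilon> * (t - 2 * \<epsilon>)"
    using alpha_eps_pos[OF assms(1,2)] assms by (intro mult_left_mono) auto
  then show ?thesis unfolding chi_eps_def using alpha_eps_pos[OF assms(1,2)] assms(1) by simp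
qed

lemma chi_eps_le_exp:
  assumes "0 < \<epsilon>" "\<epsilon> \<le> 1/2"
  shows "chi_eps \<epsilon> T t \<le> 2 * exp (2 * alpha_eps \<epsilon> * (t - 2 * \<epsilon>))"
proof -
  have "\<epsilon> ^ 6 \<le> (1/2) ^ 6" using assms by (intro power_mono) auto
  then have "\<epsilon> ^ 6 \<le> 1/64" by (simp add: power_divide)
  then have d: "1 \<le> 2 * tanh (alpha_eps \<epsilon> * \<epsilon>)"
    unfolding tanh_alpha_eps_mult_eps[OF assms(1)] by (simp add: le_divide_eq add_pos_nonneg)
  have "tanh (alpha_eps \<epsilon> * (t - 2 * \<epsilon>)) - tanh (alpha_eps \<epsilon> * (t - T + 2 * \<epsilon>))
      \<le> 1 + tanh (alpha_eps \<epsilon> * (t - 2 * \<epsilon>))"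
    using tanh_real_gt_neg1[of "alpha_eps \<epsilon> * (t - T + 2 * \<epsilon>)"] by linarith
  also have "\<dots> \<le> 2 * exp (2 * alpha_eps \<epsilon> * (t - 2 * \<epsilon>))"
    using one_plus_tanh_le by (simp add: mult.assoc)
  also have "\<dots> \<le> 2 * exp (2 * alpha_eps \<epsilon> * (t - 2 * \<epsilon>)) * (2 * tanh (alpha_eps \<epsilon> * \<epsilon>))"
    using d by simp
  moreover have "0 < 2 * tanh (alpha_eps \<epsilon> * \<epsilon>)" using d by linarith
  ultimately show ?thesis unfolding chi_eps_def by (simp only: pos_divide_le_eq)
qed

lemma chi_eps_half_mult_rho_eps_le_small:
  assumes "0 < \<epsilon>" "\<epsilon> \<le> 1/2" "0 \<le> r"
  shows "chi_eps \<epsilon> T (r / 2) * rho_eps \<epsilon> r \<le> 2 * \<epsilon>"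
proof -
  define L where "L = ln (1 / \<epsilon>)"
  have L: "0 < L" using assms unfolding L_def by simp
  have "\<epsilon> ^ 3 \<le> (1/2) ^ 3" using assms by (intro power_mono) auto
  then have e3: "\<epsilon> ^ 3 \<le> 1/8" "\<epsilon> ^ 3 \<le> \<epsilon>"
    using power_decreasing[of 1 3 \<epsilon>] assms by (auto simp: power_divide)
  have exponent: "2 * alpha_eps \<epsilon> * (r / 2 - 2 * \<epsilon>) + - 2 * beta_eps \<epsilon> * (r - \<epsilon> ^ 6) \<le> - 9 * L"
  proof -
    have "alpha_eps \<epsilon> = 3 * L * \<epsilon> ^ 2 / \<epsilon> ^ 3"
      unfolding alpha_eps_def L_def using assms by (simp add: power2_eq_square power3_eq_cube)
    also have "\<dots> \<le> 18 * L / \<epsilon> ^ 3"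
      using L assms power_le_one[of \<epsilon> 2] by (intro divide_right_mono) auto
    finally have "alpha_eps \<epsilon> * r \<le> 2 * beta_eps \<epsilon> * r"
      unfolding beta_eps_def L_def[symmetric] using assms by (intro mult_right_mono) auto
    moreover have "alpha_eps \<epsilon> * \<epsilon> = 3 * L"
      unfolding alpha_eps_def L_def using assms by simp
    moreover have "2 * beta_eps \<epsilon> * \<epsilon> ^ 6 = 18 * L * \<epsilon> ^ 3"
      unfolding beta_eps_def L_def using assms by (simp add: field_simps)
    moreover have "18 * L * \<epsilon> ^ 3 \<le> 3 * L" using e3 L by simp
    ultimately show ?thesis by (simp add: algebra_simps)
  qed
  have "chi_eps \<epsilon> T (r / 2) * rho_eps \<epsilon> r
      \<le> 2 * exp (2 * alpha_eps \<epsilon> * (r / 2 - 2 * \<epsilon>)) * (exp (- 2 * beta_eps \<epsilon> * (r - \<epsilon> ^ 6)) / \<epsilon> ^ 6)"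
    using assms by (intro mult_mono chi_eps_le_exp rho_eps_le_exp rho_eps_nonneg) auto
  also have "\<dots> = 2 * exp (2 * alpha_eps \<epsilon> * (r / 2 - 2 * \<epsilon>) + - 2 * beta_eps \<epsilon> * (r - \<epsilon> ^ 6)) / \<epsilon> ^ 6"
    by (simp add: mult_exp_exp)
  also have "\<dots> \<le> 2 * exp (- 9 * L) / \<epsilon> ^ 6"
    using exponent by (intro divide_right_mono) auto
  also have "exp (- 9 * L) = \<epsilon> ^ 9"
    unfolding L_def using assms exp_of_nat_mult[of 9 "ln \<epsilon>"] by (simp add: ln_div)
  also have "2 * \<epsilon> ^ 9 / \<epsilon> ^ 6 = 2 * \<epsilon> ^ 3"
    using assms by (simp add: field_simps)
  finally show ?thesis using e3 by simp
qed

lemma chi_eps_mult_rho_eps_le_large: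
  assumes "1/2 \<le> \<epsilon>" "\<epsilon> < 1" "4 * \<epsilon> < T"
  shows "chi_eps \<epsilon> T t * rho_eps \<epsilon> r \<le> 1728 * T * \<epsilon>"
proof -
  have e0: "0 < \<epsilon>" using assms by simp
  have "chi_eps \<epsilon> T t \<le> 12 * T"
  proof -
    have "(1/2) ^ 2 \<le> \<epsilon> ^ 2" using assms by (intro power_mono) auto
    then have "1/4 \<le> \<epsilon> ^ 2" by (simp add: power_divide)
    then have "3 * T / \<epsilon> ^ 2 \<le> 3 * T / (1/4)" using assms by (intro divide_left_mono) auto
    then show ?thesis using chi_eps_le[OF e0 assms(2,3), of t] by simp
  qed
  moreover have "rho_eps \<epsilon> r \<le> 72"
  proof -
    have "(1 - \<epsilon>) / \<epsilon> \<le> 1" using assms e0 by (simp add: divide_le_eq)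
    then have "ln (1 / \<epsilon>) \<le> 1" using ln_inverse_le[OF e0] by linarith
    moreover have "(1/2) ^ 3 \<le> \<epsilon> ^ 3" using assms by (intro power_mono) auto
    ultimately have "beta_eps \<epsilon> \<le> 9 / (1/8)"
      unfolding beta_eps_def by (intro frac_le) (auto simp: power_divide)
    then show ?thesis using rho_eps_le_beta_eps[OF e0 assms(2), of r] by simp
  qed
  ultimately have "chi_eps \<epsilon> T t * rho_eps \<epsilon> r \<le> 12 * T * 72"
    using assms rho_eps_nonneg[OF e0 assms(2)] by (intro mult_mono) auto
  also have "\<dots> \<le> 1728 * T * \<epsilon>" using assms by simp
  finally show ?thesis .
qed

lemma chi_eps_half_mult_rho_eps_le:
  assumes "0 < \<epsilon>" "\<epsilon> < 1" "4 * \<epsilon> < T" "0 \<le> r"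
  shows "chi_eps \<epsilon> T (r / 2) * rho_eps \<epsilon> r \<le> (2 + 1728 * T) * \<epsilon>"
proof (cases "\<epsilon> \<le> 1/2")
  case True
  then have "chi_eps \<epsilon> T (r / 2) * rho_eps \<epsilon> r \<le> 2 * \<epsilon>"
    using assms by (intro chi_eps_half_mult_rho_eps_le_small)
  also have "\<dots> \<le> (2 + 1728 * T) * \<epsilon>" using assms by (intro mult_right_mono) auto
  finally show ?thesis .
next
  case False
  then have "chi_eps \<epsilon> T (r / 2) * rho_eps \<epsilon> r \<le> 1728 * T * \<epsilon>"
    using assms by (intro chi_eps_mult_rho_eps_le_large) auto
  then show ?thesis using assms by (simp add: algebra_simps)
qed

(* An antiderivative of rho is (ln cosh (beta (x + eps^6)) - ln cosh (beta (x - eps^6))) / (2 beta eps^6),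
   which is bounded by 1 in absolute value since ln cosh is 1-Lipschitz. *)
lemma rho_eps_shift_integral:
  assumes "0 < \<epsilon>" "\<epsilon> < 1" "a \<le> b"
  shows "(\<lambda>x. rho_eps \<epsilon> (x - y)) integrable_on {a..b}"
    and "integral {a..b} (\<lambda>x. rho_eps \<epsilon> (x - y)) \<le> 2"
proof -
  define \<beta> where "\<beta> = beta_eps \<epsilon>"
  define \<delta> where "\<delta> = \<epsilon> ^ 6"
  have \<beta>: "\<beta> > 0" and \<delta>: "\<delta> > 0"
    unfolding \<beta>_def \<delta>_def using beta_eps_pos assms by auto
  define R where "R u = (ln (cosh (\<beta> * (u + \<delta>))) - ln (cosh (\<beta> * (u - \<delta>)))) / (2 * \<delta> * \<beta>)" for u
  have R_bound: "\<bar>R u\<bar> \<le> 1" for u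
  proof -
    have "\<bar>ln (cosh (\<beta> * (u + \<delta>))) - ln (cosh (\<beta> * (u - \<delta>)))\<bar> \<le> \<bar>\<beta> * (u + \<delta>) - \<beta> * (u - \<delta>)\<bar>"
      by (rule abs_ln_cosh_diff_le)
    also have "\<dots> = 2 * \<delta> * \<beta>" using \<delta> \<beta> by (simp add: algebra_simps)
    finally show ?thesis unfolding R_def using \<delta> \<beta> by (simp add: abs_div divide_le_eq)
  qed
  have "((\<lambda>x. R (x - y)) has_real_derivative rho_eps \<epsilon> (x - y)) (at x)" for x
  proof -
    have "((\<lambda>x. ln (cosh (\<beta> * (x - y + c)))) has_real_derivative tanh (\<beta> * (x - y + c)) * \<beta>) (at x)" for c
      by (rule DERIV_chain2[OF DERIV_ln_cosh]) (auto intro!: derivative_eq_intros)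
    from this[of \<delta>] this[of "- \<delta>", unfolded add_uminus_conv_diff] have "((\<lambda>x. R (x - y)) has_real_derivative
        (tanh (\<beta> * (x - y + \<delta>)) * \<beta> - tanh (\<beta> * (x - y - \<delta>)) * \<beta>) / (2 * \<delta> * \<beta>)) (at x)"
      unfolding R_def by (intro DERIV_cdivide DERIV_diff)
    moreover have "(tanh (\<beta> * (x - y + \<delta>)) * \<beta> - tanh (\<beta> * (x - y - \<delta>)) * \<beta>) / (2 * \<delta> * \<beta>)
        = rho_eps \<epsilon> (x - y)"
      unfolding rho_eps_def \<beta>_def[symmetric] \<delta>_def[symmetric] using \<delta> \<beta> by (simp add: field_simps)
    ultimately show ?thesis by simp
  qed
  then have "((\<lambda>x. rho_eps \<epsilon> (x - y)) has_integral R (b - y) - R (a - y)) {a..b}"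
    using assms(3) by (intro fundamental_theorem_of_calculus)
      (auto intro: has_field_derivative_at_within simp flip: has_real_derivative_iff_has_vector_derivative)
  then show "(\<lambda>x. rho_eps \<epsilon> (x - y)) integrable_on {a..b}"
    and "integral {a..b} (\<lambda>x. rho_eps \<epsilon> (x - y)) \<le> 2"
    using R_bound[of "b - y"] R_bound[of "a - y"] by (auto simp: has_integral_iff abs_le_iff)
qed

lemma abs_integral_le_rho_eps_shift:
  fixes f :: "real \<Rightarrow> real"
  assumes "0 < \<epsilon>" "\<epsilon> < 1" "a \<le> b" "0 \<le> c"
    and "\<And>x. x \<in> {a..b} \<Longrightarrow> \<bar>f x\<bar> \<le> c * rho_eps \<epsilon> (x - y)"
  shows "\<bar>integral {a..b} f\<bar> \<le> 2 * c"
proof -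
  have "\<bar>integral {a..b} f\<bar> \<le> integral {a..b} (\<lambda>x. c * rho_eps \<epsilon> (x - y))"
    using assms integrable_on_cmult_left[OF rho_eps_shift_integral(1)[OF assms(1-3)]]
    by (intro abs_integral_le_integral) auto
  also have "\<dots> = c * integral {a..b} (\<lambda>x. rho_eps \<epsilon> (x - y))"
    by simp
  also have "\<dots> \<le> c * 2"
    using assms rho_eps_shift_integral(2) by (intro mult_left_mono) auto
  finally show ?thesis by simp
qed

section \<open>The test function\<close>

lemma phibar_eps_at_0:
  "phibar_eps \<epsilon> T y s x 0 = chi_eps \<epsilon> T (s / 2) * rho_eps \<epsilon> s * rho_eps \<epsilon> (x - y)"
  unfolding phibar_eps_def using rho_eps_minus[of \<epsilon> s] by simp

lemma phibar_eps_at_T: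
  "phibar_eps \<epsilon> T y s x T = chi_eps \<epsilon> T ((T - s) / 2) * rho_eps \<epsilon> (T - s) * rho_eps \<epsilon> (x - y)"
proof -
  have "chi_eps \<epsilon> T ((T + s) / 2) = chi_eps \<epsilon> T (T - (T - s) / 2)"
    by (rule arg_cong[where f = "chi_eps \<epsilon> T"]) (simp add: field_simps)
  also have "\<dots> = chi_eps \<epsilon> T ((T - s) / 2)" by (rule chi_eps_reflect)
  finally show ?thesis unfolding phibar_eps_def by simp
qed

lemma abs_phibar_eps_boundary_le:
  assumes "0 < \<epsilon>" "\<epsilon> < 1" "4 * \<epsilon> < T" "s \<in> {0..T}" "t \<in> {0, T}"
  shows "\<bar>phibar_eps \<epsilon> T y s x t\<bar> \<le> (2 + 1728 * T) * \<epsilon> * rho_eps \<epsilon> (x - y)"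
proof -
  obtain r where "0 \<le> r"
    and r: "phibar_eps \<epsilon> T y s x t = chi_eps \<epsilon> T (r / 2) * rho_eps \<epsilon> r * rho_eps \<epsilon> (x - y)"
    using assms(4,5) phibar_eps_at_0 phibar_eps_at_T by (metis atLeastAtMost_iff diff_ge_0_iff_ge insert_iff singletonD)
  have "0 \<le> chi_eps \<epsilon> T (r / 2) * rho_eps \<epsilon> r"
    using assms chi_eps_nonneg rho_eps_nonneg by simp
  moreover have "chi_eps \<epsilon> T (r / 2) * rho_eps \<epsilon> r \<le> (2 + 1728 * T) * \<epsilon>"
    using chi_eps_half_mult_rho_eps_le assms \<open>0 \<le> r\<close> by blast
  ultimately show ?thesis
    unfolding r using rho_eps_nonneg[OF assms(1,2)] by (simp add: abs_mult mult_right_mono)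
qed

lemma phibar_eps_time_DERIV:
  "((\<lambda>\<tau>. phibar_eps \<epsilon> T y s x \<tau>) has_real_derivative deriv (\<lambda>\<tau>. phibar_eps \<epsilon> T y s x \<tau>) t) (at t)"
proof -
  have "\<exists>D. ((\<lambda>\<tau>. phibar_eps \<epsilon> T y s x \<tau>) has_real_derivative D) (at t)"
    unfolding phibar_eps_def chi_eps_def rho_eps_def
    by (rule exI, (rule DERIV_mult DERIV_cdivide DERIV_diff DERIV_add DERIV_cmult has_field_derivative_tanh
        DERIV_const DERIV_ident | simp)+)
  then show ?thesis
    by (simp add: DERIV_deriv_iff_real_differentiable real_differentiable_def)
qed

lemma lipschitz_on_phibar_eps_time:
  obtains K where "K-lipschitz_on {a..b} (\<lambda>t. phibar_eps \<epsilon> T y s x t)"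
proof -
  have "\<exists>K. K-lipschitz_on {a..b} (\<lambda>t. chi_eps \<epsilon> T ((t + s) / 2))"
    and "\<exists>K. K-lipschitz_on {a..b} (\<lambda>t. rho_eps \<epsilon> (t - s))"
    unfolding chi_eps_def rho_eps_def
    by (rule exI, (rule lipschitz_on_divide_real lipschitz_on_diff lipschitz_on_add lipschitz_on_cmult_real
        lipschitz_on_id lipschitz_on_constant lipschitz_on_compose2[where g = tanh, OF _ lipschitz_on_tanh])+)+
  then obtain K\<^sub>1 K\<^sub>2 where "K\<^sub>1-lipschitz_on {a..b} (\<lambda>t. chi_eps \<epsilon> T ((t + s) / 2))"
    and rho: "K\<^sub>2-lipschitz_on {a..b} (\<lambda>t. rho_eps \<epsilon> (t - s))"
    by blast
  then obtain K\<^sub>3 where "K\<^sub>3-lipschitz_on {a..b} (\<lambda>t. chi_eps \<epsilon> T ((t + s) / 2) * rho_eps \<epsilon> (x - y))"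
    using lipschitz_on_mult_compact[OF compact_Icc _ lipschitz_on_constant] by blast
  then obtain K where "K-lipschitz_on {a..b} (\<lambda>t. chi_eps \<epsilon> T ((t + s) / 2) * rho_eps \<epsilon> (x - y) * rho_eps \<epsilon> (t - s))"
    using lipschitz_on_mult_compact[OF compact_Icc _ rho] by blast
  then show thesis by (rule that[unfolded phibar_eps_def])
qed

lemma abs_integral_phibar_eps_time_le:
  fixes w w' :: "real \<Rightarrow> real"
  assumes "0 < \<epsilon>" "\<epsilon> < 1" "4 * \<epsilon> < T" "s \<in> {0..T}"
    and "L-lipschitz_on {0..T} w"
    and "AE t in lborel. t \<in> {0<..<T} \<longrightarrow> (w has_real_derivative w' t) (at t)"
    and "\<bar>w 0\<bar> \<le> B" "\<bar>w T\<bar> \<le> B"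
  shows "\<bar>integral {0..T} (\<lambda>t. phibar_eps \<epsilon> T y s x t * w' t + w t * deriv (\<lambda>\<tau>. phibar_eps \<epsilon> T y s x \<tau>) t)\<bar>
    \<le> 2 * B * (2 + 1728 * T) * \<epsilon> * rho_eps \<epsilon> (x - y)"
proof -
  let ?\<phi> = "\<lambda>t. phibar_eps \<epsilon> T y s x t"
  let ?M = "(2 + 1728 * T) * \<epsilon> * rho_eps \<epsilon> (x - y)"
  have "0 \<le> ?M" using assms rho_eps_nonneg[OF assms(1,2)] by (intro mult_nonneg_nonneg) auto
  obtain K where "K-lipschitz_on {0..T} ?\<phi>" by (rule lipschitz_on_phibar_eps_time)
  then have "integral {0..T} (\<lambda>t. ?\<phi> t * w' t + w t * deriv ?\<phi> t) = ?\<phi> T * w T - ?\<phi> 0 * w 0"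
    using assms phibar_eps_time_DERIV
    by (intro integral_unique lipschitz_ae_product_rule_has_integral) auto
  also have "\<bar>\<dots>\<bar> \<le> ?M * B + ?M * B"
    using abs_phibar_eps_boundary_le[OF assms(1-4)] assms(7,8) \<open>0 \<le> ?M\<close>
    by (intro order_trans[OF abs_triangle_ineq4] add_mono) (auto simp: abs_mult intro!: mult_mono)
  also have "\<dots> = 2 * B * (2 + 1728 * T) * \<epsilon> * rho_eps \<epsilon> (x - y)" by simp
  finally show ?thesis .
qed

lemma abs_integral_phibar_eps_le:
  fixes z zt :: "real \<Rightarrow> real \<Rightarrow> real \<Rightarrow> real \<Rightarrow> real"
  assumes \<epsilon>: "0 < \<epsilon>" "\<epsilon> < 1" "4 * \<epsilon> < T"
    and lip: "\<And>x y s. x \<in> {0..1} \<Longrightarrow> y \<in> {0..1} \<Longrightarrow> s \<in> {0..T} \<Longrightarrow>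
      L-lipschitz_on {0..T} (\<lambda>t. z x t y s)"
    and der: "\<And>x y s. x \<in> {0..1} \<Longrightarrow> y \<in> {0..1} \<Longrightarrow> s \<in> {0..T} \<Longrightarrow>
      AE t in lborel. t \<in> {0<..<T} \<longrightarrow> ((\<lambda>\<tau>. z x \<tau> y s) has_real_derivative zt x t y s) (at t)"
    and bnd: "\<And>x t y s. x \<in> {0..1} \<Longrightarrow> t \<in> {0..T} \<Longrightarrow> y \<in> {0..1} \<Longrightarrow> s \<in> {0..T} \<Longrightarrow>
      \<bar>z x t y s\<bar> \<le> B"
  shows "\<bar>integral {0..1} (\<lambda>y. integral {0..T} (\<lambda>s. integral {0..1} (\<lambda>x. integral {0..T} (\<lambda>t.
      phibar_eps \<epsilon> T y s x t * zt x t y s + z x t y s * deriv (\<lambda>\<tau>. phibar_eps \<epsilon> T y s x \<tau>) t))))\<bar>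
    \<le> 4 * (2 + 1728 * T) * T * B * \<epsilon>"
proof -
  let ?K = "2 + 1728 * T"
  have "0 \<le> B" using bnd[of 0 0 0 0] \<epsilon> by force
  have x_integral: "\<bar>integral {0..1} (\<lambda>x. integral {0..T} (\<lambda>t.
      phibar_eps \<epsilon> T y s x t * zt x t y s + z x t y s * deriv (\<lambda>\<tau>. phibar_eps \<epsilon> T y s x \<tau>) t))\<bar>
      \<le> 2 * (2 * B * ?K * \<epsilon>)" if "y \<in> {0..1}" "s \<in> {0..T}" for y s
  proof (rule abs_integral_le_rho_eps_shift[OF \<epsilon>(1,2)])
    fix x :: real assume x: "x \<in> {0..1}"
    show "\<bar>integral {0..T} (\<lambda>t. phibar_eps \<epsilon> T y s x t * zt x t y s
        + z x t y s * deriv (\<lambda>\<tau>. phibar_eps \<epsilon> T y s x \<tau>) t)\<bar> \<le> 2 * B * ?K * \<epsilon> * rho_eps \<epsilon> (x - y)"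
      using \<epsilon> x that lip der bnd by (intro abs_integral_phibar_eps_time_le) auto
  qed (use \<open>0 \<le> B\<close> \<epsilon> in auto)
  have s_integral: "\<bar>integral {0..T} (\<lambda>s. integral {0..1} (\<lambda>x. integral {0..T} (\<lambda>t.
      phibar_eps \<epsilon> T y s x t * zt x t y s + z x t y s * deriv (\<lambda>\<tau>. phibar_eps \<epsilon> T y s x \<tau>) t)))\<bar>
      \<le> integral {0..T} (\<lambda>s. 2 * (2 * B * ?K * \<epsilon>))" if "y \<in> {0..1}" for y
    using x_integral[OF that] by (rule abs_integral_le_integral) auto
  have "\<bar>integral {0..1} (\<lambda>y. integral {0..T} (\<lambda>s. integral {0..1} (\<lambda>x. integral {0..T} (\<lambda>t.
      phibar_eps \<epsilon> T y s x t * zt x t y s + z x t y s * deriv (\<lambda>\<tau>. phibar_eps \<epsilon> T y s x \<tau>) t))))\<bar>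
      \<le> integral {0..1} (\<lambda>y::real. integral {0..T} (\<lambda>s. 2 * (2 * B * ?K * \<epsilon>)))"
    using s_integral by (rule abs_integral_le_integral) auto
  also have "\<dots> = 4 * ?K * T * B * \<epsilon>" using \<epsilon> by simp
  finally show ?thesis .
qed

theorem lemmaA6:
  fixes T :: real
  assumes "T > 0"
  shows "\<exists>C>0. \<forall>\<epsilon> B :: real. \<forall>z zt :: real \<Rightarrow> real \<Rightarrow> real \<Rightarrow> real \<Rightarrow> real.
     0 < \<epsilon> \<longrightarrow> \<epsilon> < 1 \<longrightarrow> T > 4 * \<epsilon> \<longrightarrow> B > 0 \<longrightarrow>
     (\<exists>L. \<forall>x t y s x' t' y' s'.
          x \<in> {0..1} \<longrightarrow> t \<in> {0..T} \<longrightarrow> y \<in> {0..1} \<longrightarrow> s \<in> {0..T} \<longrightarrow>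
          x' \<in> {0..1} \<longrightarrow> t' \<in> {0..T} \<longrightarrow> y' \<in> {0..1} \<longrightarrow> s' \<in> {0..T} \<longrightarrow>
          \<bar>z x t y s - z x' t' y' s'\<bar> \<le> L * (\<bar>x - x'\<bar> + \<bar>t - t'\<bar> + \<bar>y - y'\<bar> + \<bar>s - s'\<bar>)) \<longrightarrow>
     (\<forall>x y s. x \<in> {0..1} \<longrightarrow> y \<in> {0..1} \<longrightarrow> s \<in> {0..T} \<longrightarrow>
          (AE t in lborel. t \<in> {0<..<T} \<longrightarrow>
             ((\<lambda>\<tau>. z x \<tau> y s) has_real_derivative zt x t y s) (at t))) \<longrightarrow>
     (\<forall>x t y s. x \<in> {0..1} \<longrightarrow> t \<in> {0..T} \<longrightarrow> y \<in> {0..1} \<longrightarrow> s \<in> {0..T} \<longrightarrow>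
          \<bar>z x t y s\<bar> \<le> B) \<longrightarrow>
     \<bar>integral {0..1} (\<lambda>y. integral {0..T} (\<lambda>s. integral {0..1} (\<lambda>x. integral {0..T} (\<lambda>t.
          phibar_eps \<epsilon> T y s x t * zt x t y s
          + z x t y s * deriv (\<lambda>\<tau>. phibar_eps \<epsilon> T y s x \<tau>) t))))\<bar> \<le> C * B * \<epsilon>"
proof (intro exI[of _ "4 * (2 + 1728 * T) * T"] conjI allI impI; (elim exE)?)
  show "0 < 4 * (2 + 1728 * T) * T" using assms by simp
next
  fix \<epsilon> B L :: real and z zt :: "real \<Rightarrow> real \<Rightarrow> real \<Rightarrow> real \<Rightarrow> real"
  assume \<epsilon>: "0 < \<epsilon>" "\<epsilon> < 1" "T > 4 * \<epsilon>"
    and der: "\<forall>x y s. x \<in> {0..1} \<longrightarrow> y \<in> {0..1} \<longrightarrow> s \<in> {0..T} \<longrightarrow>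
      (AE t in lborel. t \<in> {0<..<T} \<longrightarrow> ((\<lambda>\<tau>. z x \<tau> y s) has_real_derivative zt x t y s) (at t))"
    and bnd: "\<forall>x t y s. x \<in> {0..1} \<longrightarrow> t \<in> {0..T} \<longrightarrow> y \<in> {0..1} \<longrightarrow> s \<in> {0..T} \<longrightarrow> \<bar>z x t y s\<bar> \<le> B"
    and lip: "\<forall>x t y s x' t' y' s'.
      x \<in> {0..1} \<longrightarrow> t \<in> {0..T} \<longrightarrow> y \<in> {0..1} \<longrightarrow> s \<in> {0..T} \<longrightarrow>
      x' \<in> {0..1} \<longrightarrow> t' \<in> {0..T} \<longrightarrow> y' \<in> {0..1} \<longrightarrow> s' \<in> {0..T} \<longrightarrow>
      \<bar>z x t y s - z x' t' y' s'\<bar> \<le> L * (\<bar>x - x'\<bar> + \<bar>t - t'\<bar> + \<bar>y - y'\<bar> + \<bar>s - s'\<bar>)"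
  have lip_t: "\<bar>L\<bar>-lipschitz_on {0..T} (\<lambda>t. z x t y s)"
    if "x \<in> {0..1}" "y \<in> {0..1}" "s \<in> {0..T}" for x y s
  proof (rule lipschitz_onI)
    fix t t' assume "t \<in> {0..T}" "t' \<in> {0..T}"
    then have "\<bar>z x t y s - z x t' y s\<bar> \<le> L * \<bar>t - t'\<bar>"
      using lip[rule_format, of x t y s x t' y s] that by simp
    then show "dist (z x t y s) (z x t' y s) \<le> \<bar>L\<bar> * dist t t'"
      by (simp add: dist_real_def) (metis abs_ge_self abs_ge_zero mult_right_mono order_trans)
  qed simp
  show "\<bar>integral {0..1} (\<lambda>y. integral {0..T} (\<lambda>s. integral {0..1} (\<lambda>x. integral {0..T} (\<lambda>t.
      phibar_eps \<epsilon> T y s x t * zt x t y s + z x t y s * deriv (\<lambda>\<tau>. phibar_eps \<epsilon> T y s x \<tau>) t))))\<bar>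
    \<le> 4 * (2 + 1728 * T) * T * B * \<epsilon>"
    by (rule abs_integral_phibar_eps_le[OF \<epsilon> lip_t]) (use der bnd in blast)+
qed

end
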